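(* Let $G$ be the Cayley graph of a finitely generated group with respect to a finite symmetric generating set, and suppose its volume growth satisfies $v(n)\succeq n^d$ for some $d\geq 2$. Then for every sequence of nonnegative integers $\{f(n)\}_{n\geq 1}$ with $f(n)=o(n^{d-2})$, the graph $G$ does not satisfy the $\{f(n)\}$-containment property.
   Context: Firefighter process on a graph $G$ with a sequence of integers $\{f(n)\}$: an initial fire occupies a finite set of vertices; at each time $n\geq 1$, at most $f(n)$ vertices that are not on fire become protected, and then the fire spreads to all unprotected neighbours of vertices on fire; once a vertex is protected or on fire it stays so forever. $G$ has the $\{f(n)\}$-containment property if for every finite initial fire there is a protection strategy (protecting at most $f(n)$ vertices at time $n$) such that the set of burning vertices is eventually constant. The volume growth is $v(n)=|B_n(\mathrm{id})|$, the number of group elements at word distance at most $n$ from the identity. For functions $g,h$, $g\preceq h$ means there is $C>0$ with $g(x)\leq C h(Cx)$ for all $x$, and $h\succeq g$ means $g\preceq h$. *)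

theory Defs
  imports "HOL-Algebra.Generated_Groups" "HOL-Library.Landau_Symbols"
begin

text \<open>P n is the set of vertices protected at time n (n \<ge> 1); F is the initial fire.
  burning n is the set of vertices on fire after time n.\<close>

primrec burning :: "'a set \<Rightarrow> ('a \<Rightarrow> 'a \<Rightarrow> bool) \<Rightarrow> 'a set \<Rightarrow> (nat \<Rightarrow> 'a set) \<Rightarrow> nat \<Rightarrow> 'a set" where
  "burning V adj F P 0 = F"
| "burning V adj F P (Suc n) =
     burning V adj F P n \<union>
     {y \<in> V. y \<notin> (\<Union>k\<in>{1..Suc n}. P k) \<and> (\<exists>x\<in>burning V adj F P n. adj x y)}"

definition valid_strategy :: "'a set \<Rightarrow> ('a \<Rightarrow> 'a \<Rightarrow> bool) \<Rightarrow> (nat \<Rightarrow> nat) \<Rightarrow> 'a set \<Rightarrow> (nat \<Rightarrow> 'a set) \<Rightarrow> bool" where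
  "valid_strategy V adj f F P \<longleftrightarrow>
     (\<forall>n\<ge>1. P n \<subseteq> V \<and> finite (P n) \<and> card (P n) \<le> f n \<and>
            P n \<inter> burning V adj F P (n - 1) = {})"

definition containment_property :: "'a set \<Rightarrow> ('a \<Rightarrow> 'a \<Rightarrow> bool) \<Rightarrow> (nat \<Rightarrow> nat) \<Rightarrow> bool" where
  "containment_property V adj f \<longleftrightarrow>
     (\<forall>F. finite F \<and> F \<subseteq> V \<longrightarrow>
        (\<exists>P. valid_strategy V adj f F P \<and>
             (\<exists>N. \<forall>n\<ge>N. burning V adj F P n = burning V adj F P N)))"

definition cayley_adj :: "('a, 'b) monoid_scheme \<Rightarrow> 'a set \<Rightarrow> 'a \<Rightarrow> 'a \<Rightarrow> bool" where
  "cayley_adj G S x y \<longleftrightarrow> x \<in> carrier G \<and> (\<exists>s\<in>S. y = x \<otimes>\<^bsub>G\<^esub> s)"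

definition word_prod :: "('a, 'b) monoid_scheme \<Rightarrow> 'a list \<Rightarrow> 'a" where
  "word_prod G ws = foldr (\<lambda>a b. a \<otimes>\<^bsub>G\<^esub> b) ws \<one>\<^bsub>G\<^esub>"

definition word_ball :: "('a, 'b) monoid_scheme \<Rightarrow> 'a set \<Rightarrow> real \<Rightarrow> 'a set" where
  "word_ball G S r = {g \<in> carrier G. \<exists>ws. set ws \<subseteq> S \<and> real (length ws) \<le> r \<and> word_prod G ws = g}"

definition volume_growth :: "('a, 'b) monoid_scheme \<Rightarrow> 'a set \<Rightarrow> real \<Rightarrow> nat" where
  "volume_growth G S r = card (word_ball G S r)"

end

theory Submission
  imports Defs
begin

text \<open>
  Volume growth of degree \<open>d\<close> gives the Cayley graph the isoperimetric inequality
  \<open>|\<partial>A| \<ge> c |A|\<^bsup>1 - 1/d\<^esup>\<close> (Coulhon and Saloff-Coste): if a ball of radius \<open>r\<close>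
  has at least \<open>2|A|\<close> elements, then on average a right translation by one of its elements
  moves half of \<open>A\<close> out of \<open>A\<close>, whereas a translation by a word of length at most \<open>r\<close>
  moves at most \<open>r |\<partial>A|\<close> points out. Since every unprotected boundary vertex catches fire,
  the size \<open>b n\<close> of the fire satisfies
  \<open>b (n + 1) \<ge> b n + c (b n)\<^bsup>1 - 1/d\<^esup> - (f 1 + \<dots> + f (n + 1))\<close>, and as only
  \<open>o(n\<^bsup>d - 1\<^esup>)\<close> vertices are protected by time \<open>n\<close>, a large enough initial fire keeps
  growing like \<open>n\<^sup>d\<close>.
\<close>

section \<open>The firefighter process\<close>

definition vertex_boundary :: "'a set \<Rightarrow> ('a \<Rightarrow> 'a \<Rightarrow> bool) \<Rightarrow> 'a set \<Rightarrow> 'a set" where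
  "vertex_boundary V adj A = {y \<in> V. y \<notin> A \<and> (\<exists>x\<in>A. adj x y)}"

lemma finite_vertex_boundary:
  assumes "finite A" "\<And>x. finite {y. adj x y}"
  shows "finite (vertex_boundary V adj A)"
proof -
  have "vertex_boundary V adj A \<subseteq> (\<Union>x\<in>A. {y. adj x y})"
    unfolding vertex_boundary_def by blast
  then show ?thesis
    using assms by (meson finite_UN_I finite_subset)
qed

lemma burning_subset: "F \<subseteq> V \<Longrightarrow> burning V adj F P n \<subseteq> V"
  by (induction n) auto

lemma subset_burning: "F \<subseteq> burning V adj F P n"
  by (induction n) auto

lemma finite_burning:
  assumes "finite F" "\<And>x. finite {y. adj x y}"
  shows "finite (burning V adj F P n)"
proof (induction n)
  case (Suc n)
  have "burning V adj F P (Suc n) \<subseteq>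
      burning V adj F P n \<union> (\<Union>x\<in>burning V adj F P n. {y. adj x y})"
    by auto
  then show ?case
    using Suc assms(2) by (meson finite_UN_I finite_Un finite_subset)
qed (simp add: assms(1))

lemma card_burning_Suc_ge:
  assumes "valid_strategy V adj f F P" "finite F" "\<And>x. finite {y. adj x y}"
  shows "card (burning V adj F P n) + card (vertex_boundary V adj (burning V adj F P n))
    \<le> card (burning V adj F P (Suc n)) + (\<Sum>k=1..Suc n. f k)"
proof -
  let ?A = "burning V adj F P"
  let ?bd = "vertex_boundary V adj (?A n)"
  let ?Q = "\<Union>k\<in>{1..Suc n}. P k"
  have P: "finite (P k)" "card (P k) \<le> f k" if "k \<in> {1..Suc n}" for k
    using assms(1) that unfolding valid_strategy_def by auto
  have finite_A: "finite (?A m)" for m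
    using finite_burning assms(2,3) .
  have "card ?Q \<le> (\<Sum>k=1..Suc n. card (P k))"
    by (rule card_UN_le) simp
  also have "\<dots> \<le> (\<Sum>k=1..Suc n. f k)"
    using P(2) by (rule sum_mono)
  finally have card_Q: "card ?Q \<le> (\<Sum>k=1..Suc n. f k)" .
  have finite_bd: "finite ?bd"
    using finite_vertex_boundary finite_A assms(3) .
  have "card ?bd \<le> card ((?bd - ?Q) \<union> ?Q)"
    using finite_bd P(1) by (intro card_mono) auto
  also have "\<dots> \<le> card (?bd - ?Q) + card ?Q"
    by (rule card_Un_le)
  finally have "card ?bd \<le> card (?bd - ?Q) + card ?Q" .
  moreover have "card (?A n) + card (?bd - ?Q) = card (?A n \<union> (?bd - ?Q))"
    using finite_A finite_bd by (intro card_Un_disjoint[symmetric]) (auto simp: vertex_boundary_def)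
  moreover have "card (?A n \<union> (?bd - ?Q)) \<le> card (?A (Suc n))"
    by (intro card_mono[OF finite_A]) (auto simp: vertex_boundary_def)
  ultimately show ?thesis
    using card_Q by linarith
qed

lemma card_burning_isoperimetric_recursion:
  assumes P: "valid_strategy V adj f F P" and F: "finite F" "F \<subseteq> V" "F \<noteq> {}"
    and locally_finite: "\<And>x. finite {y. adj x y}"
    and iso: "\<And>A. finite A \<Longrightarrow> A \<subseteq> V \<Longrightarrow> A \<noteq> {} \<Longrightarrow>
      c * real (card A) powr e \<le> real (card (vertex_boundary V adj A))"
  shows "real (card (burning V adj F P n)) + c * real (card (burning V adj F P n)) powr e
      - (\<Sum>k=1..Suc n. real (f k)) \<le> real (card (burning V adj F P (Suc n)))"
proof -
  let ?A = "burning V adj F P"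
  have "?A n \<noteq> {}"
    using F(3) subset_burning[of F V adj P n] by blast
  then have "c * real (card (?A n)) powr e \<le> real (card (vertex_boundary V adj (?A n)))"
    by (rule iso[OF finite_burning[OF F(1) locally_finite] burning_subset[OF F(2)]])
  moreover have "real (card (?A n) + card (vertex_boundary V adj (?A n)))
      \<le> real (card (?A (Suc n)) + (\<Sum>k=1..Suc n. f k))"
    using card_burning_Suc_ge[OF P F(1) locally_finite, of n] by (simp only: of_nat_le_iff)
  ultimately show ?thesis
    by simp
qed

section \<open>Isoperimetry in Cayley graphs\<close>

abbreviation cayley_boundary :: "('a, 'b) monoid_scheme \<Rightarrow> 'a set \<Rightarrow> 'a set \<Rightarrow> 'a set" where
  "cayley_boundary G S A \<equiv> vertex_boundary (carrier G) (cayley_adj G S) A"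

lemma finite_cayley_neighbours:
  assumes "finite S"
  shows "finite {y. cayley_adj G S x y}"
proof -
  have "{y. cayley_adj G S x y} \<subseteq> (\<lambda>s. x \<otimes>\<^bsub>G\<^esub> s) ` S"
    unfolding cayley_adj_def by blast
  then show ?thesis
    using assms by (meson finite_imageI finite_subset)
qed

lemma mem_cayley_boundary:
  assumes "A \<subseteq> carrier G"
  shows "y \<in> cayley_boundary G S A \<longleftrightarrow>
    y \<in> carrier G \<and> y \<notin> A \<and> (\<exists>x\<in>A. \<exists>s\<in>S. y = x \<otimes>\<^bsub>G\<^esub> s)"
  using assms unfolding vertex_boundary_def cayley_adj_def by blast

lemma word_prod_Nil [simp]: "word_prod G [] = \<one>\<^bsub>G\<^esub>"
  and word_prod_Cons [simp]: "word_prod G (a # ws) = a \<otimes>\<^bsub>G\<^esub> word_prod G ws"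
  by (simp_all add: word_prod_def)

lemma (in monoid) word_prod_closed: "set ws \<subseteq> carrier G \<Longrightarrow> word_prod G ws \<in> carrier G"
  by (induction ws) auto

lemma (in monoid) word_prod_append:
  "set xs \<subseteq> carrier G \<Longrightarrow> set ys \<subseteq> carrier G \<Longrightarrow>
    word_prod G (xs @ ys) = word_prod G xs \<otimes> word_prod G ys"
  by (induction xs) (auto simp: word_prod_closed m_assoc)

lemma (in monoid) word_exits_through_boundary:
  assumes "S \<subseteq> carrier G" "A \<subseteq> carrier G" "a \<in> A"
  shows "set ws \<subseteq> S \<Longrightarrow> a \<otimes> word_prod G ws \<notin> A \<Longrightarrow>
    \<exists>i<length ws. a \<otimes> word_prod G (take (Suc i) ws) \<in> cayley_boundary G S A"
proof (induction ws rule: rev_induct)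
  case Nil
  then show ?case
    using assms by auto
next
  case (snoc s ws)
  have ws: "set ws \<subseteq> carrier G" "s \<in> carrier G" and a: "a \<in> carrier G"
    using snoc.prems assms by auto
  show ?case
  proof (cases "a \<otimes> word_prod G ws \<in> A")
    case True
    have "a \<otimes> word_prod G (ws @ [s]) = (a \<otimes> word_prod G ws) \<otimes> s"
      using ws a by (simp add: word_prod_append word_prod_closed m_assoc)
    then have "a \<otimes> word_prod G (ws @ [s]) \<in> cayley_boundary G S A"
      using True snoc.prems ws a assms(2) by (auto simp: mem_cayley_boundary word_prod_closed)
    then show ?thesis
      by (intro exI[of _ "length ws"]) auto
  next
    case False
    with snoc obtain i where "i < length ws" "a \<otimes> word_prod G (take (Suc i) ws) \<in> cayley_boundary G S A"
      by auto
    then show ?thesis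
      by (intro exI[of _ i]) auto
  qed
qed

lemma (in group) card_translates_leaving_le:
  assumes "S \<subseteq> carrier G" "finite S" "A \<subseteq> carrier G" "finite A" "set ws \<subseteq> S"
  shows "card {a \<in> A. a \<otimes> word_prod G ws \<notin> A} \<le> length ws * card (cayley_boundary G S A)"
proof -
  let ?bd = "cayley_boundary G S A"
  let ?w = "\<lambda>i. word_prod G (take (Suc i) ws)"
  let ?exit = "\<lambda>i. {a \<in> A. a \<otimes> ?w i \<in> ?bd}"
  have w: "?w i \<in> carrier G" for i
    using assms(1,5) set_take_subset word_prod_closed by (metis order_trans)
  have "finite ?bd"
    using finite_vertex_boundary[OF assms(4) finite_cayley_neighbours[OF assms(2)]] .
  then have card_exit: "card (?exit i) \<le> card ?bd" for i
    by (intro card_inj_on_le[OF inj_on_g[OF _ w]]) (use assms(3) in auto)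
  have "{a \<in> A. a \<otimes> word_prod G ws \<notin> A} \<subseteq> (\<Union>i<length ws. ?exit i)"
    using word_exits_through_boundary[OF assms(1,3) _ assms(5)] by blast
  then have "card {a \<in> A. a \<otimes> word_prod G ws \<notin> A} \<le> card (\<Union>i<length ws. ?exit i)"
    using assms(4) by (intro card_mono) auto
  also have "\<dots> \<le> (\<Sum>i<length ws. card (?exit i))"
    by (rule card_UN_le) simp
  also have "\<dots> \<le> (\<Sum>i<length ws. card ?bd)"
    using card_exit by (rule sum_mono)
  finally show ?thesis
    by simp
qed

lemma (in group) card_le_twice_translates_leaving:
  assumes "A \<subseteq> carrier G" "finite A" "a \<in> A" "B \<subseteq> carrier G" "finite B" "2 * card A \<le> card B"
  shows "card B \<le> 2 * card {g \<in> B. a \<otimes> g \<notin> A}"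
proof -
  have "card {g \<in> B. a \<otimes> g \<in> A} \<le> card A"
    using assms(1-4) by (intro card_inj_on_le[OF inj_on_subset[OF inj_on_cmult[of a]]]) auto
  moreover have "card B = card ({g \<in> B. a \<otimes> g \<in> A} \<union> {g \<in> B. a \<otimes> g \<notin> A})"
    by (rule arg_cong[where f = card]) blast
  then have "card B = card {g \<in> B. a \<otimes> g \<in> A} + card {g \<in> B. a \<otimes> g \<notin> A}"
    using assms(5) by (simp add: card_Un_disjoint disjoint_iff)
  ultimately show ?thesis
    using assms(6) by linarith
qed

lemma (in group) card_le_boundary_of_ball:
  assumes "S \<subseteq> carrier G" "finite S" "A \<subseteq> carrier G" "finite A" "finite B"
    and words: "\<And>g. g \<in> B \<Longrightarrow> \<exists>ws. set ws \<subseteq> S \<and> length ws \<le> r \<and> word_prod G ws = g"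
    and large: "2 * card A \<le> card B"
  shows "card A \<le> 2 * r * card (cayley_boundary G S A)"
proof -
  let ?bd = "cayley_boundary G S A"
  have B: "B \<subseteq> carrier G"
  proof
    fix g
    assume "g \<in> B"
    then obtain ws where "set ws \<subseteq> S" "word_prod G ws = g"
      using words by blast
    then show "g \<in> carrier G"
      using assms(1) word_prod_closed by blast
  qed
  have leaving: "card {a \<in> A. a \<otimes> g \<notin> A} \<le> r * card ?bd" if g: "g \<in> B" for g
  proof -
    obtain ws where ws: "set ws \<subseteq> S" "length ws \<le> r" and g_eq: "g = word_prod G ws"
      using words[OF g] by blast
    have "card {a \<in> A. a \<otimes> g \<notin> A} \<le> length ws * card ?bd"
      unfolding g_eq by (rule card_translates_leaving_le[OF assms(1-4) ws(1)])
    also have "\<dots> \<le> r * card ?bd"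
      using ws(2) by (rule mult_le_mono1)
    finally show ?thesis .
  qed
  have half: "card B \<le> 2 * card {g \<in> B. a \<otimes> g \<notin> A}" if "a \<in> A" for a
    using card_le_twice_translates_leaving[OF assms(3,4) that B assms(5) large] .
  \<comment> \<open>double counting of the pairs \<open>(a, g) \<in> A \<times> B\<close> with \<open>a \<otimes> g \<notin> A\<close>\<close>
  have "card A * card B \<le> (\<Sum>a\<in>A. 2 * card {g \<in> B. a \<otimes> g \<notin> A})"
    using sum_mono[of A "\<lambda>_. card B", OF half] by simp
  also have "\<dots> = (\<Sum>g\<in>B. 2 * card {a \<in> A. a \<otimes> g \<notin> A})"
    using sum.swap_restrict[OF assms(4,5), of "\<lambda>_ _. 2::nat" "\<lambda>a g. a \<otimes> g \<notin> A"]
    by (simp add: mult.commute)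
  also have "\<dots> \<le> (\<Sum>g\<in>B. 2 * (r * card ?bd))"
    using leaving by (intro sum_mono) simp
  also have "\<dots> = card B * (2 * r * card ?bd)"
    by simp
  finally have "card B * card A \<le> card B * (2 * r * card ?bd)"
    by (simp only: mult.commute)
  moreover have "card A > 0 \<Longrightarrow> card B > 0"
    using large by linarith
  ultimately show ?thesis
    by (cases "card A = 0") auto
qed

lemma (in group) card_le_boundary_of_volume_growth:
  assumes "S \<subseteq> carrier G" "finite S" "A \<subseteq> carrier G" "finite A" "A \<noteq> {}"
    and large: "2 * card A \<le> volume_growth G S R"
  shows "real (card A) \<le> 2 * (R + 1) * real (card (cayley_boundary G S A))"
proof -
  let ?B = "word_ball G S R"
  have "card ?B > 0"
    using large assms(4,5) card_gt_0_iff unfolding volume_growth_def by fastforce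
  then have "finite ?B" and "?B \<noteq> {}"
    by (simp_all add: card_gt_0_iff)
  then have "R \<ge> 0"
    unfolding word_ball_def by (auto intro: order_trans[OF of_nat_0_le_iff])
  have "\<exists>ws. set ws \<subseteq> S \<and> length ws \<le> nat \<lceil>R\<rceil> \<and> word_prod G ws = g" if "g \<in> ?B" for g
    using that unfolding word_ball_def by (auto simp: le_nat_iff le_ceiling_iff)
  then have "card A \<le> 2 * nat \<lceil>R\<rceil> * card (cayley_boundary G S A)"
    using large unfolding volume_growth_def
    by (intro card_le_boundary_of_ball[OF assms(1-4) \<open>finite ?B\<close>]) auto
  then have "real (card A) \<le> 2 * real (nat \<lceil>R\<rceil>) * real (card (cayley_boundary G S A))"
    by (metis of_nat_le_iff of_nat_mult of_nat_numeral)
  also have "\<dots> \<le> 2 * (R + 1) * real (card (cayley_boundary G S A))"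
    using \<open>R \<ge> 0\<close> by (intro mult_right_mono) (simp_all, linarith)
  finally show ?thesis .
qed

lemma (in group) cayley_isoperimetric_inequality:
  assumes "S \<subseteq> carrier G" "finite S" "d > 0" "C > 0"
    and growth: "\<And>x. x \<ge> 0 \<Longrightarrow> x powr d \<le> C * real (volume_growth G S (C * x))"
  obtains c where "c > 0"
    and "\<And>A. finite A \<Longrightarrow> A \<subseteq> carrier G \<Longrightarrow> A \<noteq> {} \<Longrightarrow>
      c * real (card A) powr (1 - 1/d) \<le> real (card (cayley_boundary G S A))"
proof
  define D where "D = C * (2 * C) powr (1/d) + 1"
  have "D > 0"
    unfolding D_def using \<open>C > 0\<close> by (simp add: add_pos_nonneg)
  then show "1 / (2 * D) > 0"
    by simp
  fix A
  assume A: "finite A" "A \<subseteq> carrier G" "A \<noteq> {}"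
  let ?bd = "real (card (cayley_boundary G S A))"
  define m where "m = real (card A)"
  have "m \<ge> 1"
    using A by (simp add: m_def Suc_le_eq card_gt_0_iff)
  then have "m powr (1/d) \<ge> 1"
    using \<open>d > 0\<close> by (intro ge_one_powr_ge_zero) simp_all
  \<comment> \<open>the ball of radius \<open>C x\<close> has at least \<open>2 m\<close> elements\<close>
  define x where "x = (2 * C * m) powr (1/d)"
  have "x powr d = 2 * C * m"
    using assms(3,4) \<open>m \<ge> 1\<close> by (simp add: x_def powr_powr)
  then have "C * (2 * m) \<le> C * real (volume_growth G S (C * x))"
    using growth[of x] by (simp add: x_def)
  then have "2 * card A \<le> volume_growth G S (C * x)"
    using \<open>C > 0\<close> by (simp add: m_def)
  then have "m \<le> 2 * (C * x + 1) * ?bd"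
    unfolding m_def by (rule card_le_boundary_of_volume_growth[OF assms(1,2) A(2,1,3)])
  also have "C * x + 1 \<le> D * m powr (1/d)"
    using \<open>C > 0\<close> \<open>m \<ge> 1\<close> \<open>m powr (1/d) \<ge> 1\<close>
    by (simp add: D_def x_def powr_mult distrib_right)
  then have "2 * (C * x + 1) * ?bd \<le> 2 * (D * m powr (1/d)) * ?bd"
    by (intro mult_right_mono) simp_all
  finally have "m \<le> ?bd * (2 * D * m powr (1/d))"
    by (simp only: ac_simps)
  moreover have "2 * D * m powr (1/d) > 0"
    using \<open>D > 0\<close> \<open>m powr (1/d) \<ge> 1\<close> by (intro mult_pos_pos) linarith+
  ultimately have "m / (2 * D * m powr (1/d)) \<le> ?bd"
    by (simp add: pos_divide_le_eq)
  moreover have "1 / (2 * D) * m powr (1 - 1/d) = m / (2 * D * m powr (1/d))"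
    using \<open>m \<ge> 1\<close> by (simp add: powr_diff)
  ultimately show "1 / (2 * D) * real (card A) powr (1 - 1/d) \<le> ?bd"
    by (simp add: m_def)
qed

section \<open>Growth of the fire\<close>

lemma partial_sums_smallo_powr:
  fixes f :: "nat \<Rightarrow> real"
  assumes "p \<ge> 0" "f \<in> o(\<lambda>n. real n powr p)" "\<epsilon> > 0"
  shows "\<exists>K. \<forall>n. (\<Sum>k=1..n. f k) \<le> \<epsilon> * real n powr (p + 1) + K"
proof -
  obtain N where N: "\<And>k. k \<ge> N \<Longrightarrow> \<bar>f k\<bar> \<le> \<epsilon> * real k powr p"
    using landau_o.smallD[OF assms(2,3)] by (auto simp: eventually_at_top_linorder)
  define K where "K = (\<Sum>k=1..N. \<bar>f k\<bar>)"
  have "(\<Sum>k=1..n. f k) \<le> \<epsilon> * real n powr (p + 1) + K" for n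
  proof -
    have f_le: "f k \<le> (if k \<le> N then \<bar>f k\<bar> else 0) + \<epsilon> * real n powr p" if "k \<in> {1..n}" for k
    proof (cases "k \<le> N")
      case True
      then show ?thesis
        using assms(3) by (intro add_increasing2) auto
    next
      case False
      then have "f k \<le> \<epsilon> * real k powr p"
        using N[of k] by simp
      also have "\<dots> \<le> \<epsilon> * real n powr p"
        using that assms(1,3) by (intro mult_left_mono powr_mono2) auto
      finally show ?thesis
        using False by simp
    qed
    have "(\<Sum>k=1..n. f k) \<le> (\<Sum>k=1..n. (if k \<le> N then \<bar>f k\<bar> else 0) + \<epsilon> * real n powr p)"
      using f_le by (rule sum_mono)
    also have "\<dots> = (\<Sum>k\<in>{1..n} \<inter> {..N}. \<bar>f k\<bar>) + real n * (\<epsilon> * real n powr p)"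
      by (simp add: sum.distrib sum.If_cases Int_def)
    also have "(\<Sum>k\<in>{1..n} \<inter> {..N}. \<bar>f k\<bar>) \<le> K"
      unfolding K_def by (intro sum_mono2) auto
    also have "real n * (\<epsilon> * real n powr p) = \<epsilon> * real n powr (p + 1)"
      by (cases "n = 0") (simp_all add: powr_add)
    finally show ?thesis
      by simp
  qed
  then show ?thesis
    by blast
qed

lemma powr_Suc_diff_le:
  fixes m d :: real
  assumes "m \<ge> 1" "d \<ge> 1"
  shows "(m + 1) powr d - m powr d \<le> d * 2 powr (d - 1) * m powr (d - 1)"
proof -
  have "\<exists>z. m < z \<and> z < m + 1 \<and> (m + 1) powr d - m powr d = (m + 1 - m) * (d * z powr (d - 1))"
    by (rule MVT2) (use assms in \<open>auto intro!: has_real_derivative_powr\<close>)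
  then obtain z where z: "m < z" "z < m + 1" "(m + 1) powr d - m powr d = d * z powr (d - 1)"
    by auto
  have "z powr (d - 1) \<le> (2 * m) powr (d - 1)"
    using z assms by (intro powr_mono2) auto
  also have "\<dots> = 2 powr (d - 1) * m powr (d - 1)"
    using assms by (simp add: powr_mult)
  finally show ?thesis
    using z(3) assms by (simp add: mult_left_mono)
qed

text \<open>The hypothesis \<open>lam_small\<close> makes the increment \<open>lam ((m + 1)\<^sup>d - m\<^sup>d)\<close> at most half
  of the gain \<open>c (lam m\<^sup>d)\<^bsup>1 - 1/d\<^esup>\<close>; the loss \<open>s\<close> may take the other half.\<close>

lemma isoperimetric_recursion_step:
  fixes c d lam m y s :: real
  assumes "d \<ge> 1" "m \<ge> 1" "lam > 0"
    and lam_small: "d * 2 powr d * lam powr (1/d) \<le> c"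
    and y: "lam * m powr d \<le> y"
    and s: "s \<le> c * lam powr (1 - 1/d) / 2 * m powr (d - 1)"
  shows "lam * (m + 1) powr d \<le> y + c * y powr (1 - 1/d) - s"
proof -
  let ?e = "1 - 1/d"
  let ?gain = "c * lam powr ?e * m powr (d - 1)"
  have "c \<ge> 0"
    using lam_small assms(1) by (smt (verit) mult_nonneg_nonneg powr_ge_zero)
  have "d * ?e = d - 1"
    using assms(1) by (simp add: field_simps)
  then have "lam powr ?e * m powr (d - 1) = (lam * m powr d) powr ?e"
    using assms(2,3) by (simp add: powr_mult powr_powr)
  also have "\<dots> \<le> y powr ?e"
    using y assms(1,3) by (intro powr_mono2) simp_all
  finally have "?gain \<le> c * y powr ?e"
    using \<open>c \<ge> 0\<close> by (simp add: mult.assoc mult_left_mono)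
  have "lam * ((m + 1) powr d - m powr d) \<le> lam * (d * 2 powr (d - 1) * m powr (d - 1))"
    using assms(3) by (intro mult_left_mono powr_Suc_diff_le[OF assms(2,1)]) simp
  also have "\<dots> = (d * 2 powr d * lam powr (1/d)) * lam powr ?e * m powr (d - 1) / 2"
    using assms(3) by (simp add: powr_diff powr_add[symmetric] mult_ac)
  also have "\<dots> \<le> ?gain / 2"
    using lam_small by (intro divide_right_mono mult_right_mono) simp_all
  finally show ?thesis
    using \<open>?gain \<le> c * y powr ?e\<close> y s by (simp add: algebra_simps)
qed

lemma isoperimetric_recursion_lower_bound:
  fixes b S :: "nat \<Rightarrow> real" and c d lam :: real
  assumes "d \<ge> 1" "lam > 0" "K \<ge> 1" "d * 2 powr d * lam powr (1/d) \<le> c"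
    and S: "\<And>n. S (Suc n) \<le> c * lam powr (1 - 1/d) / 2 * real (n + K) powr (d - 1)"
    and rec: "\<And>n. b n + c * b n powr (1 - 1/d) - S (Suc n) \<le> b (Suc n)"
    and init: "lam * real K powr d \<le> b 0"
  shows "lam * real (n + K) powr d \<le> b n"
proof (induction n)
  case 0
  then show ?case
    using init by simp
next
  case (Suc n)
  have "lam * (real (n + K) + 1) powr d \<le> b n + c * b n powr (1 - 1/d) - S (Suc n)"
    using Suc.IH S[of n] assms(1-4) by (intro isoperimetric_recursion_step) simp_all
  also have "\<dots> \<le> b (Suc n)"
    by (rule rec)
  finally show ?case
    by (simp add: add_ac)
qed

lemma polynomial_growth_of_isoperimetric_recursion:
  fixes c d :: real and S :: "nat \<Rightarrow> real"
  assumes "c > 0" "d \<ge> 2"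
    and S: "\<And>\<epsilon>. \<epsilon> > 0 \<Longrightarrow> \<exists>K. \<forall>n. S n \<le> \<epsilon> * real n powr (d - 1) + K"
  obtains lam :: real and K :: nat where "lam > 0" "K \<ge> 1"
    and "\<And>b n. (\<And>n. b n + c * b n powr (1 - 1/d) - S (Suc n) \<le> b (Suc n)) \<Longrightarrow>
      lam * real K powr d \<le> b 0 \<Longrightarrow> lam * real (n + K) powr d \<le> b n"
proof -
  define lam where "lam = (c / (d * 2 powr d)) powr d"
  have "lam > 0"
    using assms(1,2) by (simp add: lam_def)
  have lam_small: "d * 2 powr d * lam powr (1/d) \<le> c"
    using assms(1,2) by (simp add: lam_def powr_powr)
  define \<delta> where "\<delta> = c * lam powr (1 - 1/d) / 2"
  have "\<delta> > 0"
    using assms(1) \<open>lam > 0\<close> by (simp add: \<delta>_def)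
  then obtain K0 where K0: "\<And>n. S n \<le> \<delta> / 2 * real n powr (d - 1) + K0"
    using S[of "\<delta> / 2"] by auto
  define K where "K = max 1 (nat \<lceil>2 * K0 / \<delta>\<rceil>)"
  have "K \<ge> 1"
    by (simp add: K_def)
  have "2 * K0 / \<delta> \<le> real K"
    unfolding K_def by linarith
  then have "K0 \<le> \<delta> / 2 * real K"
    using \<open>\<delta> > 0\<close> by (simp add: field_simps)
  also have "real K \<le> real K powr (d - 1)"
    using powr_mono[of 1 "d - 1" "real K"] \<open>K \<ge> 1\<close> assms(2) by simp
  finally have K0_le: "K0 \<le> \<delta> / 2 * real K powr (d - 1)"
    using \<open>\<delta> > 0\<close> by simp
  have "S (Suc n) \<le> \<delta> * real (n + K) powr (d - 1)" for n
  proof -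
    have "real (Suc n) powr (d - 1) \<le> real (n + K) powr (d - 1)"
      "real K powr (d - 1) \<le> real (n + K) powr (d - 1)"
      using \<open>K \<ge> 1\<close> assms(2) by (auto intro!: powr_mono2)
    then have "\<delta> / 2 * real (Suc n) powr (d - 1) \<le> \<delta> / 2 * real (n + K) powr (d - 1)"
      "\<delta> / 2 * real K powr (d - 1) \<le> \<delta> / 2 * real (n + K) powr (d - 1)"
      using \<open>\<delta> > 0\<close> by simp_all
    then show ?thesis
      using K0[of "Suc n"] K0_le by linarith
  qed
  then show ?thesis
    using that[OF \<open>lam > 0\<close> \<open>K \<ge> 1\<close>] isoperimetric_recursion_lower_bound[of d lam K c S]
      assms(2) \<open>lam > 0\<close> \<open>K \<ge> 1\<close> lam_small
    unfolding \<delta>_def by simp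
qed

lemma powr_eventually_exceeds:
  fixes lam d y :: real
  assumes "lam > 0" "d \<ge> 1"
  obtains n where "n \<ge> N" "y < lam * real (n + K) powr d"
proof
  define n where "n = N + nat \<lceil>y / lam\<rceil> + 1"
  show "n \<ge> N"
    by (simp add: n_def)
  have "y / lam < real (n + K)"
    unfolding n_def by linarith
  also have "\<dots> \<le> real (n + K) powr d"
    using powr_mono[of 1 d "real (n + K)"] assms(2) by (simp add: n_def)
  finally show "y < lam * real (n + K) powr d"
    using assms(1) by (simp add: field_simps)
qed

section \<open>Failure of containment\<close>

lemma infinite_if_isoperimetric:
  assumes "V \<noteq> {}" "c > 0"
    and iso: "\<And>A. finite A \<Longrightarrow> A \<subseteq> V \<Longrightarrow> A \<noteq> {} \<Longrightarrow>
      c * real (card A) powr e \<le> real (card (vertex_boundary V adj A))"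
  shows "infinite V"
proof
  assume "finite V"
  moreover have "vertex_boundary V adj V = {}"
    by (auto simp: vertex_boundary_def)
  ultimately have "c * real (card V) powr e \<le> 0"
    using iso[of V] assms(1) by simp
  moreover have "card V > 0"
    using \<open>finite V\<close> assms(1) by (simp add: card_gt_0_iff)
  ultimately show False
    using assms(2) by (simp add: mult_le_0_iff)
qed

theorem not_containment_property_if_isoperimetric:
  fixes f :: "nat \<Rightarrow> nat" and c d :: real
  assumes "V \<noteq> {}" and locally_finite: "\<And>x. finite {y. adj x y}" and "c > 0" "d \<ge> 2"
    and iso: "\<And>A. finite A \<Longrightarrow> A \<subseteq> V \<Longrightarrow> A \<noteq> {} \<Longrightarrow>
      c * real (card A) powr (1 - 1/d) \<le> real (card (vertex_boundary V adj A))"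
    and f: "(\<lambda>n. real (f n)) \<in> o(\<lambda>n. real n powr (d - 2))"
  shows "\<not> containment_property V adj f"
proof
  assume contained: "containment_property V adj f"
  let ?protected = "\<lambda>n. \<Sum>k=1..n. real (f k)"
  have "\<exists>K. \<forall>n. ?protected n \<le> \<epsilon> * real n powr (d - 1) + K" if "\<epsilon> > 0" for \<epsilon>
    using partial_sums_smallo_powr[OF _ f that] assms(4) by simp
  then obtain lam K where "lam > 0" "K \<ge> 1" and grow: "\<And>b n.
      (\<And>n. b n + c * b n powr (1 - 1/d) - ?protected (Suc n) \<le> b (Suc n)) \<Longrightarrow>
      lam * real K powr d \<le> b 0 \<Longrightarrow> lam * real (n + K) powr d \<le> b n"
    using polynomial_growth_of_isoperimetric_recursion[OF \<open>c > 0\<close> \<open>d \<ge> 2\<close>, of ?protected]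
    by blast
  obtain F where F: "finite F" "F \<subseteq> V" "card F = nat \<lceil>lam * real K powr d\<rceil>"
    using infinite_arbitrarily_large[OF infinite_if_isoperimetric[OF assms(1,3) iso]] by blast
  have "\<exists>P. valid_strategy V adj f F P \<and> (\<exists>N. \<forall>n\<ge>N. burning V adj F P n = burning V adj F P N)"
    using contained F(1,2) unfolding containment_property_def by simp
  then obtain P N where P: "valid_strategy V adj f F P"
    and N: "\<forall>n\<ge>N. burning V adj F P n = burning V adj F P N"
    by blast
  have "lam * real K powr d > 0"
    using \<open>lam > 0\<close> \<open>K \<ge> 1\<close> by simp
  then have "F \<noteq> {}"
    using F(3) by auto
  define b where "b n = real (card (burning V adj F P n))" for n
  have "b n + c * b n powr (1 - 1/d) - ?protected (Suc n) \<le> b (Suc n)" for n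
    unfolding b_def using card_burning_isoperimetric_recursion[OF P F(1,2) \<open>F \<noteq> {}\<close> locally_finite iso] .
  moreover have "lam * real K powr d \<le> b 0"
    using F(3) by (simp add: b_def) linarith
  ultimately have lower: "lam * real (n + K) powr d \<le> b n" for n
    by (rule grow)
  have "d \<ge> 1"
    using assms(4) by simp
  obtain n where "n \<ge> N" "b N < lam * real (n + K) powr d"
    using powr_eventually_exceeds[OF \<open>lam > 0\<close> \<open>d \<ge> 1\<close>, where N = N and K = K and y = "b N"]
    by blast
  moreover have "b n = b N"
    unfolding b_def using N \<open>n \<ge> N\<close> by presburger
  ultimately show False
    using lower[of n] by linarith
qed

theorem theorem1:
  fixes G :: "('a, 'b) monoid_scheme" and S :: "'a set" and d :: real and f :: "nat \<Rightarrow> nat"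
  assumes "group G"
    and "finite S" and "S \<subseteq> carrier G"
    and "\<forall>s\<in>S. inv\<^bsub>G\<^esub> s \<in> S"
    and "generate G S = carrier G"
    and "d \<ge> 2"
    and "\<exists>C>0. \<forall>x::real. x \<ge> 0 \<longrightarrow> x powr d \<le> C * real (volume_growth G S (C * x))"
    and "(\<lambda>n. real (f n)) \<in> o(\<lambda>n. real n powr (d - 2))"
  shows "\<not> containment_property (carrier G) (cayley_adj G S) f"
proof -
  interpret group G
    by fact
  obtain C where "C > 0"
    and growth: "\<forall>x::real. x \<ge> 0 \<longrightarrow> x powr d \<le> C * real (volume_growth G S (C * x))"
    using assms(7) by blast
  have "d > 0"
    using assms(6) by simp
  obtain c where "c > 0" and iso: "\<And>A. finite A \<Longrightarrow> A \<subseteq> carrier G \<Longrightarrow> A \<noteq> {} \<Longrightarrow>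
      c * real (card A) powr (1 - 1/d) \<le> real (card (cayley_boundary G S A))"
    using cayley_isoperimetric_inequality[OF assms(3,2) \<open>d > 0\<close> \<open>C > 0\<close> growth[rule_format]] by blast
  show ?thesis
    using not_containment_property_if_isoperimetric[OF _ finite_cayley_neighbours[OF assms(2)]
        \<open>c > 0\<close> assms(6) iso assms(8)]
    by blast
qed

end
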